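(* Let $\alpha\in(0,1)$ and let $j\ge2$ be an integer, with coefficients $c_s^{(\alpha)}$, $0\le s\le j$, as defined in the context. Then $$\frac{11}{16}\cdot\frac{1-\alpha}{(j+1)^\alpha}<c_j^{(\alpha)}<\frac{1-\alpha}{j^\alpha},$$ $$c_0^{(\alpha)}>c_2^{(\alpha)}>c_3^{(\alpha)}>\dots>c_{j-1}^{(\alpha)}>c_j^{(\alpha)}\quad(\text{i.e. } c_0^{(\alpha)}>c_2^{(\alpha)} \text{ and } c_s^{(\alpha)}>c_{s+1}^{(\alpha)} \text{ for } 2\le s\le j-1),$$ $$c_0^{(\alpha)}+3c_1^{(\alpha)}-4c_2^{(\alpha)}>0.$$
   Context: For $l\ge 0$: $a_l^{(\alpha)}=(l+1)^{1-\alpha}-l^{1-\alpha}$ and $b_l^{(\alpha)}=\frac{1}{2-\alpha}\left[(l+1)^{2-\alpha}-l^{2-\alpha}\right]-\frac12\left[(l+1)^{1-\alpha}+l^{1-\alpha}\right]$. The coefficients $c_s^{(\alpha)}$ depend on $j$: for $j=2$: $c_0^{(\alpha)}=a_0^{(\alpha)}+b_0^{(\alpha)}$, $c_1^{(\alpha)}=a_1^{(\alpha)}+b_1^{(\alpha)}+b_2^{(\alpha)}-b_0^{(\alpha)}$, $c_2^{(\alpha)}=a_2^{(\alpha)}-b_2^{(\alpha)}-b_1^{(\alpha)}$; for $j\ge3$: $c_0^{(\alpha)}=a_0^{(\alpha)}+b_0^{(\alpha)}$, $c_s^{(\alpha)}=a_s^{(\alpha)}+b_s^{(\alpha)}-b_{s-1}^{(\alpha)}$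 for $1\le s\le j-2$, $c_{j-1}^{(\alpha)}=a_{j-1}^{(\alpha)}+b_{j-1}^{(\alpha)}+b_j^{(\alpha)}-b_{j-2}^{(\alpha)}$, $c_j^{(\alpha)}=a_j^{(\alpha)}-b_j^{(\alpha)}-b_{j-1}^{(\alpha)}$. *)

theory Defs
  imports Complex_Main
begin

definition acoef :: "real \<Rightarrow> nat \<Rightarrow> real" where
  "acoef \<alpha> l = (real l + 1) powr (1 - \<alpha>) - (real l) powr (1 - \<alpha>)"

definition bcoef :: "real \<Rightarrow> nat \<Rightarrow> real" where
  "bcoef \<alpha> l = 1 / (2 - \<alpha>) * ((real l + 1) powr (2 - \<alpha>) - (real l) powr (2 - \<alpha>))
                 - 1 / 2 * ((real l + 1) powr (1 - \<alpha>) + (real l) powr (1 - \<alpha>))"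

definition ccoef :: "real \<Rightarrow> nat \<Rightarrow> nat \<Rightarrow> real" where
  "ccoef \<alpha> j s =
    (if j = 2 then
       (if s = 0 then acoef \<alpha> 0 + bcoef \<alpha> 0
        else if s = 1 then acoef \<alpha> 1 + bcoef \<alpha> 1 + bcoef \<alpha> 2 - bcoef \<alpha> 0
        else acoef \<alpha> 2 - bcoef \<alpha> 2 - bcoef \<alpha> 1)
     else
       (if s = 0 then acoef \<alpha> 0 + bcoef \<alpha> 0
        else if s \<le> j - 2 then acoef \<alpha> s + bcoef \<alpha> s - bcoef \<alpha> (s - 1)
        else if s = j - 1 then acoef \<alpha> (j-1) + bcoef \<alpha> (j-1) + bcoef \<alpha> j - bcoef \<alpha> (j-2)
        else acoef \<alpha> j - bcoef \<alpha> j - bcoef \<alpha> (j-1)))"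

end

theory Submission
  imports Defs
begin

text \<open>Write f(y) = y powr (1 - \<alpha>) and F for its primitive. Then a_l = f(l + 1) - f(l), and b_l
  is the error of the trapezoidal rule for the integral of f over [l, l + 1]. The mean value
  theorem gives f'(l + 1) < a_l < f'(l), and since -f'' = \<alpha> (1 - \<alpha>) y powr (-\<alpha> - 1) is
  decreasing, the error formula of the trapezoidal rule gives -f''(l + 1)/12 \<le> b_l \<le> -f''(l)/12.
  The claims about c_0, c_1, c_2 and c_j follow by comparing finitely many of these bounds.

  For 1 \<le> s \<le> j - 2, c_s is the second difference of F + f/2 at s, so its derivative in s is
  the second difference of H = f + f'/2. As H''(t) = -\<alpha> (1 - \<alpha>) t powr (-\<alpha> - 2) (t - (1 + \<alpha>)/2),
  second order Taylor bounds show that the interior coefficients decrease by more than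
  -f''(s + 2)/12, which also absorbs the extra term b_j of c_(j-1).\<close>

lemma DERIV_le_imp_increment_le:
  fixes \<phi> \<psi> \<phi>' \<psi>' :: "real \<Rightarrow> real"
  assumes "a \<le> b"
    and "\<And>x. a \<le> x \<Longrightarrow> x \<le> b \<Longrightarrow> (\<phi> has_real_derivative \<phi>' x) (at x)"
    and "\<And>x. a \<le> x \<Longrightarrow> x \<le> b \<Longrightarrow> (\<psi> has_real_derivative \<psi>' x) (at x)"
    and "\<And>x. a \<le> x \<Longrightarrow> x \<le> b \<Longrightarrow> \<phi>' x \<le> \<psi>' x"
  shows "\<phi> b - \<phi> a \<le> \<psi> b - \<psi> a"
proof -
  have "(\<lambda>x. \<psi> x - \<phi> x) a \<le> (\<lambda>x. \<psi> x - \<phi> x) b"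
  proof (rule DERIV_nonneg_imp_nondecreasing[OF assms(1)])
    fix x assume "a \<le> x" "x \<le> b"
    with assms(2-4) show "\<exists>y. ((\<lambda>x. \<psi> x - \<phi> x) has_real_derivative y) (at x) \<and> 0 \<le> y"
      by (intro exI[of _ "\<psi>' x - \<phi>' x"]) (auto intro: derivative_intros)
  qed
  then show ?thesis by simp
qed

lemma Taylor_second_order_le:
  fixes G G' G'' :: "real \<Rightarrow> real"
  assumes "\<And>t. min x y \<le> t \<Longrightarrow> t \<le> max x y \<Longrightarrow> (G has_real_derivative G' t) (at t)"
    and "\<And>t. min x y \<le> t \<Longrightarrow> t \<le> max x y \<Longrightarrow> (G' has_real_derivative G'' t) (at t)"
    and "\<And>t. min x y \<le> t \<Longrightarrow> t \<le> max x y \<Longrightarrow> G'' t \<le> -m"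
  shows "G y \<le> G x + G' x * (y - x) - m * (y - x)^2 / 2"
proof (cases "y = x")
  case False
  define diff where "diff k = (if k = 0 then G else if k = 1 then G' else G'')" for k :: nat
  have D: "\<forall>k t. k < 2 \<and> min x y \<le> t \<and> t \<le> max x y \<longrightarrow>
            (diff k has_real_derivative diff (Suc k) t) (at t)"
    using assms(1,2) by (auto simp: diff_def less_2_cases_iff)
  have "\<exists>t. (if y < x then y < t \<and> t < x else x < t \<and> t < y) \<and>
          G y = (\<Sum>k<2. diff k x / fact k * (y - x)^k) + diff 2 t / fact 2 * (y - x)^2"
    using False by (intro Taylor[OF _ _ D]) (auto simp: diff_def)
  then obtain t where t_between: "if y < x then y < t \<and> t < x else x < t \<and> t < y"
    and G_eq: "G y = (\<Sum>k<2. diff k x / fact k * (y - x)^k) + diff 2 t / fact 2 * (y - x)^2"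
    by blast
  from t_between have t: "min x y \<le> t" "t \<le> max x y" by (auto split: if_splits)
  from G_eq have G_eq: "G y = G x + G' x * (y - x) + G'' t / 2 * (y - x)^2"
    by (simp add: diff_def eval_nat_numeral)
  have "G'' t / 2 * (y - x)^2 \<le> - m / 2 * (y - x)^2"
    using assms(3)[OF t] by (intro mult_right_mono) auto
  with G_eq show ?thesis by simp
qed simp

lemma trapezoid_error_ge:
  fixes G g g' g'' :: "real \<Rightarrow> real"
  assumes "a \<le> b"
    and dG: "\<And>y. a \<le> y \<Longrightarrow> y \<le> b \<Longrightarrow> (G has_real_derivative g y) (at y)"
    and dg: "\<And>y. a \<le> y \<Longrightarrow> y \<le> b \<Longrightarrow> (g has_real_derivative g' y) (at y)"
    and dg': "\<And>y. a \<le> y \<Longrightarrow> y \<le> b \<Longrightarrow> (g' has_real_derivative g'' y) (at y)"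
    and bound: "\<And>y. a \<le> y \<Longrightarrow> y \<le> b \<Longrightarrow> m \<le> - g'' y"
  shows "m * (b - a)^3 / 12 \<le> G b - G a - (b - a) * (g a + g b) / 2"
proof -
  define u where "u y = G y - G a - (y - a) * (g a + g y) / 2" for y
  have du: "(u has_real_derivative (g y - g a) / 2 - (y - a) * g' y / 2) (at y)"
    if "a \<le> y" "y \<le> b" for y
  proof -
    have "(u has_real_derivative g y - (1 * (g a + g y) + (y - a) * g' y) / 2) (at y)"
      unfolding u_def using dG[OF that] dg[OF that] by (auto intro!: derivative_eq_intros)
    then show ?thesis by (rule DERIV_cong) (simp add: field_simps)
  qed
  have du_ge: "m * (y - a)^2 / 4 \<le> (g y - g a) / 2 - (y - a) * g' y / 2"
    if "a \<le> y" "y \<le> b" for y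
  proof -
    have "g'' t \<le> - m" if "a \<le> t" "t \<le> b" for t
      using bound[OF that] by linarith
    then have "g a \<le> g y + g' y * (a - y) - m * (a - y)^2 / 2"
      by (intro Taylor_second_order_le[of y a g g' g'' m]) (use that dg dg' in auto)
    moreover have "g' y * (a - y) = - ((y - a) * g' y)" and "m * (a - y)^2 = m * (y - a)^2"
      by (simp_all add: algebra_simps power2_commute)
    ultimately show ?thesis unfolding diff_divide_distrib by linarith
  qed
  have "m * (b - a)^3 / 12 - m * (a - a)^3 / 12 \<le> u b - u a"
  proof (rule DERIV_le_imp_increment_le[OF \<open>a \<le> b\<close>])
    fix x assume x: "a \<le> x" "x \<le> b"
    show "((\<lambda>y. m * (y - a)^3 / 12) has_real_derivative m * (x - a)^2 / 4) (at x)"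
      by (auto intro!: derivative_eq_intros)
    show "(u has_real_derivative (g x - g a) / 2 - (x - a) * g' x / 2) (at x)"
      using du[OF x] .
    show "m * (x - a)^2 / 4 \<le> (g x - g a) / 2 - (x - a) * g' x / 2"
      using du_ge[OF x] .
  qed
  moreover have "u a = 0" by (simp add: u_def)
  ultimately have "m * (b - a)^3 / 12 \<le> u b" by simp
  then show ?thesis by (simp only: u_def)
qed

lemma trapezoid_error_le:
  fixes G g g' g'' :: "real \<Rightarrow> real"
  assumes "a \<le> b"
    and "\<And>y. a \<le> y \<Longrightarrow> y \<le> b \<Longrightarrow> (G has_real_derivative g y) (at y)"
    and "\<And>y. a \<le> y \<Longrightarrow> y \<le> b \<Longrightarrow> (g has_real_derivative g' y) (at y)"
    and "\<And>y. a \<le> y \<Longrightarrow> y \<le> b \<Longrightarrow> (g' has_real_derivative g'' y) (at y)"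
    and "\<And>y. a \<le> y \<Longrightarrow> y \<le> b \<Longrightarrow> - g'' y \<le> M"
  shows "G b - G a - (b - a) * (g a + g b) / 2 \<le> M * (b - a)^3 / 12"
proof -
  have "- M * (b - a)^3 / 12 \<le> - G b - - G a - (b - a) * (- g a + - g b) / 2"
    by (rule trapezoid_error_ge[where g' = "\<lambda>y. - g' y" and g'' = "\<lambda>y. - g'' y"])
      (use assms in \<open>auto intro!: derivative_eq_intros simp: minus_le_iff\<close>)
  moreover have "(b - a) * (- g a + - g b) / 2 = - ((b - a) * (g a + g b) / 2)"
    by (simp only: minus_add_distrib[symmetric] mult_minus_right minus_divide_left)
  ultimately show ?thesis by linarith
qed

definition second_diff :: "(real \<Rightarrow> real) \<Rightarrow> real \<Rightarrow> real" where
  "second_diff \<phi> x = \<phi> (x + 1) - 2 * \<phi> x + \<phi> (x - 1)"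

lemma DERIV_second_diff:
  assumes "(\<phi> has_real_derivative \<phi>' (x + 1)) (at (x + 1))"
    and "(\<phi> has_real_derivative \<phi>' x) (at x)"
    and "(\<phi> has_real_derivative \<phi>' (x - 1)) (at (x - 1))"
  shows "(second_diff \<phi> has_real_derivative second_diff \<phi>' x) (at x)"
proof -
  have "((\<lambda>x. \<phi> (x + 1)) has_real_derivative \<phi>' (x + 1)) (at x)"
    using assms(1) by (simp add: DERIV_shift)
  moreover have "((\<lambda>x. \<phi> (x - 1)) has_real_derivative \<phi>' (x - 1)) (at x)"
    using assms(3) DERIV_shift[of \<phi> "\<phi>' (x - 1)" x "-1"] by simp
  ultimately show ?thesis
    unfolding second_diff_def[abs_def] using assms(2) by (auto intro!: derivative_eq_intros)
qed

lemma second_diff_le: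
  assumes "\<And>t. x - 1 \<le> t \<Longrightarrow> t \<le> x + 1 \<Longrightarrow> (\<phi> has_real_derivative \<phi>' t) (at t)"
    and "\<And>t. x - 1 \<le> t \<Longrightarrow> t \<le> x + 1 \<Longrightarrow> (\<phi>' has_real_derivative \<phi>'' t) (at t)"
    and "\<And>t. x - 1 \<le> t \<Longrightarrow> t \<le> x \<Longrightarrow> \<phi>'' t \<le> -m"
    and "\<And>t. x \<le> t \<Longrightarrow> t \<le> x + 1 \<Longrightarrow> \<phi>'' t \<le> -m'"
  shows "second_diff \<phi> x \<le> - (m + m') / 2"
proof -
  have "\<phi> (x + 1) \<le> \<phi> x + \<phi>' x - m' / 2"
    using Taylor_second_order_le[of x "x + 1" \<phi> \<phi>' \<phi>'' m'] assms by simp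
  moreover have "\<phi> (x - 1) \<le> \<phi> x - \<phi>' x - m / 2"
    using Taylor_second_order_le[of x "x - 1" \<phi> \<phi>' \<phi>'' m] assms by simp
  ultimately show ?thesis by (simp add: second_diff_def)
qed

definition fpow :: "real \<Rightarrow> real \<Rightarrow> real" where
  "fpow \<alpha> y = y powr (1 - \<alpha>)"

definition fpow_prim :: "real \<Rightarrow> real \<Rightarrow> real" where
  "fpow_prim \<alpha> y = y powr (2 - \<alpha>) / (2 - \<alpha>)"

definition fpow' :: "real \<Rightarrow> real \<Rightarrow> real" where
  "fpow' \<alpha> y = (1 - \<alpha>) * y powr (- \<alpha>)"

definition fpow'' :: "real \<Rightarrow> real \<Rightarrow> real" where
  "fpow'' \<alpha> y = - ((1 - \<alpha>) * \<alpha>) * y powr (- \<alpha> - 1)"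

definition fpow''' :: "real \<Rightarrow> real \<Rightarrow> real" where
  "fpow''' \<alpha> y = (1 - \<alpha>) * \<alpha> * (\<alpha> + 1) * y powr (- \<alpha> - 2)"

lemma DERIV_fpow_prim: "0 < y \<Longrightarrow> \<alpha> \<noteq> 2 \<Longrightarrow> (fpow_prim \<alpha> has_real_derivative fpow \<alpha> y) (at y)"
  unfolding fpow_prim_def[abs_def] fpow_def
  by (auto intro!: derivative_eq_intros simp: diff_diff_eq[symmetric])

lemma DERIV_fpow: "0 < y \<Longrightarrow> (fpow \<alpha> has_real_derivative fpow' \<alpha> y) (at y)"
  unfolding fpow_def[abs_def] fpow'_def by (auto intro!: derivative_eq_intros)

lemma DERIV_fpow': "0 < y \<Longrightarrow> (fpow' \<alpha> has_real_derivative fpow'' \<alpha> y) (at y)"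
  unfolding fpow'_def[abs_def] fpow''_def by (auto intro!: derivative_eq_intros)

lemma DERIV_fpow'': "0 < y \<Longrightarrow> (fpow'' \<alpha> has_real_derivative fpow''' \<alpha> y) (at y)"
  unfolding fpow''_def[abs_def] fpow'''_def
  by (auto intro!: derivative_eq_intros simp: algebra_simps)

lemma fpow'_eq_divide: "fpow' \<alpha> y = (1 - \<alpha>) / y powr \<alpha>"
  by (simp add: fpow'_def powr_minus_divide)

lemma acoef_eq_fpow: "acoef \<alpha> l = fpow \<alpha> (real l + 1) - fpow \<alpha> (real l)"
  by (simp add: acoef_def fpow_def)

lemma bcoef_eq_trapezoid_error:
  "bcoef \<alpha> l = fpow_prim \<alpha> (real l + 1) - fpow_prim \<alpha> (real l) - (fpow \<alpha> (real l) + fpow \<alpha> (real l + 1)) / 2"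
  by (simp add: bcoef_def fpow_prim_def fpow_def diff_divide_distrib)

lemma acoef_0: "acoef \<alpha> 0 = 1"
  by (simp add: acoef_def)

lemma bcoef_0: "bcoef \<alpha> 0 = 1 / (2 - \<alpha>) - 1 / 2"
  by (simp add: bcoef_def)

definition ccoef_interior :: "real \<Rightarrow> real \<Rightarrow> real" where
  "ccoef_interior \<alpha> = second_diff (\<lambda>y. fpow_prim \<alpha> y + fpow \<alpha> y / 2)"

lemma acoef_bcoef_eq_ccoef_interior:
  "1 \<le> s \<Longrightarrow> acoef \<alpha> s + bcoef \<alpha> s - bcoef \<alpha> (s - 1) = ccoef_interior \<alpha> (real s)"
  unfolding acoef_eq_fpow bcoef_eq_trapezoid_error ccoef_interior_def second_diff_def
  by (simp add: of_nat_diff field_simps)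

lemma ccoef_0: "ccoef \<alpha> j 0 = 1 / 2 + 1 / (2 - \<alpha>)"
  by (simp add: ccoef_def acoef_0 bcoef_0)

lemma ccoef_mid: "1 \<le> s \<Longrightarrow> s + 2 \<le> j \<Longrightarrow> ccoef \<alpha> j s = acoef \<alpha> s + bcoef \<alpha> s - bcoef \<alpha> (s - 1)"
  by (auto simp: ccoef_def)

lemma ccoef_penultimate:
  "3 \<le> j \<Longrightarrow> ccoef \<alpha> j (j - 1) = acoef \<alpha> (j - 1) + bcoef \<alpha> (j - 1) + bcoef \<alpha> j - bcoef \<alpha> (j - 2)"
  by (auto simp: ccoef_def)

lemma ccoef_last: "2 \<le> j \<Longrightarrow> ccoef \<alpha> j j = acoef \<alpha> j - bcoef \<alpha> j - bcoef \<alpha> (j - 1)"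
  by (auto simp: ccoef_def)

context
  fixes \<alpha> :: real
  assumes \<alpha>_pos: "0 < \<alpha>" and \<alpha>_lt_1: "\<alpha> < 1"
begin

lemma fpow'_strict_antimono: "0 < x \<Longrightarrow> x < y \<Longrightarrow> fpow' \<alpha> y < fpow' \<alpha> x"
  unfolding fpow'_def using \<alpha>_pos \<alpha>_lt_1 by (simp add: powr_less_mono2_neg)

lemma fpow''_mono: "0 < x \<Longrightarrow> x \<le> y \<Longrightarrow> fpow'' \<alpha> x \<le> fpow'' \<alpha> y"
  unfolding fpow''_def using \<alpha>_pos \<alpha>_lt_1 by (auto intro!: mult_left_mono powr_mono2')

lemma fpow''_nonpos: "fpow'' \<alpha> y \<le> 0"
  unfolding fpow''_def using \<alpha>_pos \<alpha>_lt_1 by simp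

lemma neg_fpow''_le_fpow':
  assumes "0 < x" "x \<le> y"
  shows "- fpow'' \<alpha> x \<le> y / x^2 * fpow' \<alpha> y"
proof -
  have "x powr (- \<alpha>) = (y / x) powr \<alpha> * y powr (- \<alpha>)"
    using assms by (simp add: powr_divide powr_minus field_simps)
  also have "\<dots> \<le> y / x * y powr (- \<alpha>)"
    using assms \<alpha>_pos \<alpha>_lt_1 powr_mono[of \<alpha> 1 "y / x"] by (intro mult_right_mono) auto
  finally have "x powr (- \<alpha> - 1) \<le> y / x^2 * y powr (- \<alpha>)"
    using assms by (simp add: powr_diff power2_eq_square divide_right_mono field_simps)
  moreover have "\<alpha> * x powr (- \<alpha> - 1) \<le> x powr (- \<alpha> - 1)"
    using \<alpha>_pos \<alpha>_lt_1 by (intro mult_left_le_one_le) auto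
  ultimately have "\<alpha> * x powr (- \<alpha> - 1) \<le> y / x^2 * y powr (- \<alpha>)" by linarith
  then have "(1 - \<alpha>) * (\<alpha> * x powr (- \<alpha> - 1)) \<le> (1 - \<alpha>) * (y / x^2 * y powr (- \<alpha>))"
    using \<alpha>_lt_1 by (intro mult_left_mono) auto
  also have "\<dots> = y / x^2 * fpow' \<alpha> y"
    by (simp add: fpow'_def)
  finally show ?thesis
    by (simp add: fpow''_def)
qed

lemma neg_fpow''_lt_16:
  assumes "0 < x" "0 < y" "y \<le> 4 * x"
  shows "- fpow'' \<alpha> x < - 16 * fpow'' \<alpha> y"
proof -
  have neg: "z powr (- \<alpha> - 1) = 1 / z powr (\<alpha> + 1)" for z
  proof -
    have "z powr (- \<alpha> - 1) = z powr (- (\<alpha> + 1))" by (rule arg_cong[where f = "(powr) z"]) simp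
    then show ?thesis by (simp only: powr_minus_divide)
  qed
  have "x powr (- \<alpha> - 1) = (y / x) powr (\<alpha> + 1) * y powr (- \<alpha> - 1)"
    unfolding neg using assms by (simp add: powr_divide)
  also have "\<dots> < 16 * y powr (- \<alpha> - 1)"
  proof (rule mult_strict_right_mono)
    have "(y / x) powr (\<alpha> + 1) \<le> 4 powr (\<alpha> + 1)"
      using assms \<alpha>_pos by (intro powr_mono2) (auto simp: pos_divide_le_eq)
    also have "\<dots> < 4 powr 2"
      using \<alpha>_lt_1 by (intro powr_less_mono) auto
    finally show "(y / x) powr (\<alpha> + 1) < 16" by simp
  qed (use assms in simp)
  finally show ?thesis
    unfolding fpow''_def using \<alpha>_pos \<alpha>_lt_1 by simp
qed

lemma fpow''_add_half_fpow'''_le: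
  assumes "1 \<le> lo" "lo \<le> y" "y \<le> hi"
  shows "fpow'' \<alpha> y + fpow''' \<alpha> y / 2 \<le> - ((1 - \<alpha>) * \<alpha> * hi powr (- \<alpha> - 2) * (lo - 1))"
proof -
  have y_pos: "0 < y" using assms by simp
  have "y powr (- \<alpha> - 1) = y powr (1 + (- \<alpha> - 2))" by (rule arg_cong[where f = "(powr) y"]) simp
  also have "\<dots> = y * y powr (- \<alpha> - 2)" using y_pos by (subst powr_add) simp
  finally have eq: "fpow'' \<alpha> y + fpow''' \<alpha> y / 2 = - ((1 - \<alpha>) * \<alpha> * (y powr (- \<alpha> - 2) * (y - (\<alpha> + 1) / 2)))"
    unfolding fpow''_def fpow'''_def by (simp add: algebra_simps)
  have "lo - 1 \<le> y - (\<alpha> + 1) / 2" using assms \<alpha>_lt_1 by (simp add: field_simps)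
  then have "hi powr (- \<alpha> - 2) * (lo - 1) \<le> y powr (- \<alpha> - 2) * (y - (\<alpha> + 1) / 2)"
    using assms y_pos \<alpha>_pos by (intro mult_mono powr_mono2') auto
  with \<alpha>_pos \<alpha>_lt_1 show ?thesis
    unfolding eq by (simp add: mult_left_mono)
qed

lemma acoef_bounds:
  assumes "1 \<le> l"
  shows "fpow' \<alpha> (real l + 1) < acoef \<alpha> l \<and> acoef \<alpha> l < fpow' \<alpha> (real l)"
proof -
  have "\<exists>z. real l < z \<and> z < real l + 1 \<and>
      fpow \<alpha> (real l + 1) - fpow \<alpha> (real l) = (real l + 1 - real l) * fpow' \<alpha> z"
    by (rule MVT2) (use assms in \<open>auto intro: DERIV_fpow\<close>)
  then obtain z where z: "real l < z" "z < real l + 1" and "acoef \<alpha> l = fpow' \<alpha> z"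
    by (auto simp: acoef_eq_fpow)
  moreover have "fpow' \<alpha> (real l + 1) < fpow' \<alpha> z" "fpow' \<alpha> z < fpow' \<alpha> (real l)"
    using z assms by (auto intro!: fpow'_strict_antimono)
  ultimately show ?thesis by simp
qed

lemma
  assumes "1 \<le> l"
  shows bcoef_ge: "- fpow'' \<alpha> (real l + 1) / 12 \<le> bcoef \<alpha> l"
    and bcoef_le: "bcoef \<alpha> l \<le> - fpow'' \<alpha> (real l) / 12"
proof -
  have derivs: "(fpow_prim \<alpha> has_real_derivative fpow \<alpha> y) (at y)"
      "(fpow \<alpha> has_real_derivative fpow' \<alpha> y) (at y)"
      "(fpow' \<alpha> has_real_derivative fpow'' \<alpha> y) (at y)"
    and bounds: "fpow'' \<alpha> y \<le> fpow'' \<alpha> (real l + 1)" "fpow'' \<alpha> (real l) \<le> fpow'' \<alpha> y"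
    if "real l \<le> y" "y \<le> real l + 1" for y
  proof -
    from assms that have y_pos: "0 < y" by simp
    with \<alpha>_lt_1 show "(fpow_prim \<alpha> has_real_derivative fpow \<alpha> y) (at y)"
      by (simp add: DERIV_fpow_prim)
    from y_pos show "(fpow \<alpha> has_real_derivative fpow' \<alpha> y) (at y)" by (rule DERIV_fpow)
    from y_pos show "(fpow' \<alpha> has_real_derivative fpow'' \<alpha> y) (at y)" by (rule DERIV_fpow')
    from y_pos that show "fpow'' \<alpha> y \<le> fpow'' \<alpha> (real l + 1)" by (simp add: fpow''_mono)
    from assms that show "fpow'' \<alpha> (real l) \<le> fpow'' \<alpha> y" by (simp add: fpow''_mono)
  qed
  have "- fpow'' \<alpha> (real l + 1) * (real l + 1 - real l)^3 / 12
        \<le> fpow_prim \<alpha> (real l + 1) - fpow_prim \<alpha> (real l)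
          - (real l + 1 - real l) * (fpow \<alpha> (real l) + fpow \<alpha> (real l + 1)) / 2"
    by (rule trapezoid_error_ge[where g' = "fpow' \<alpha>" and g'' = "fpow'' \<alpha>"])
      (simp_all add: derivs bounds)
  then show "- fpow'' \<alpha> (real l + 1) / 12 \<le> bcoef \<alpha> l"
    by (simp add: bcoef_eq_trapezoid_error)
  have "fpow_prim \<alpha> (real l + 1) - fpow_prim \<alpha> (real l)
          - (real l + 1 - real l) * (fpow \<alpha> (real l) + fpow \<alpha> (real l + 1)) / 2
        \<le> - fpow'' \<alpha> (real l) * (real l + 1 - real l)^3 / 12"
    by (rule trapezoid_error_le[where g' = "fpow' \<alpha>" and g'' = "fpow'' \<alpha>"])
      (simp_all add: derivs bounds)
  then show "bcoef \<alpha> l \<le> - fpow'' \<alpha> (real l) / 12"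
    by (simp add: bcoef_eq_trapezoid_error)
qed

lemma bcoef_nonneg: "1 \<le> l \<Longrightarrow> 0 \<le> bcoef \<alpha> l"
  using bcoef_ge[of l] fpow''_nonpos[of "real l + 1"] by linarith

lemma bcoef_le_inverse: "1 \<le> l \<Longrightarrow> bcoef \<alpha> l \<le> (1 - \<alpha>) * \<alpha> / (12 * real l)"
proof -
  assume l: "1 \<le> l"
  have "real l powr (- \<alpha> - 1) \<le> real l powr (- 1)"
    using l \<alpha>_pos by (intro powr_mono) auto
  then have "- fpow'' \<alpha> (real l) \<le> (1 - \<alpha>) * \<alpha> / real l"
    unfolding fpow''_def using \<alpha>_pos \<alpha>_lt_1
    by (simp add: powr_minus_divide mult_left_mono divide_inverse)
  with bcoef_le[OF l] show ?thesis by simp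
qed

lemma acoef_pred_sub_acoef_ge:
  assumes "2 \<le> l"
  shows "- fpow'' \<alpha> (real l + 1) \<le> acoef \<alpha> (l - 1) - acoef \<alpha> l"
proof -
  define L where "L = real l"
  define Q where "Q = - fpow'' \<alpha> (L + 1)"
  have L: "2 \<le> L" using assms by (simp add: L_def)
  have "second_diff (fpow \<alpha>) L \<le> - (Q + Q) / 2"
  proof (rule second_diff_le)
    fix t assume "L - 1 \<le> t" "t \<le> L + 1"
    with L have "0 < t" by simp
    then show "(fpow \<alpha> has_real_derivative fpow' \<alpha> t) (at t)"
      and "(fpow' \<alpha> has_real_derivative fpow'' \<alpha> t) (at t)"
      by (rule DERIV_fpow, rule DERIV_fpow')
  next
    fix t assume "L - 1 \<le> t" "t \<le> L"
    with L show "fpow'' \<alpha> t \<le> - Q" by (simp add: Q_def fpow''_mono)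
  next
    fix t assume "L \<le> t" "t \<le> L + 1"
    with L show "fpow'' \<alpha> t \<le> - Q" by (simp add: Q_def fpow''_mono)
  qed
  with assms show ?thesis
    by (simp add: acoef_eq_fpow second_diff_def L_def Q_def of_nat_diff)
qed

lemma DERIV_ccoef_interior:
  "1 < y \<Longrightarrow> (ccoef_interior \<alpha> has_real_derivative second_diff (\<lambda>y. fpow \<alpha> y + fpow' \<alpha> y / 2) y) (at y)"
  unfolding ccoef_interior_def using \<alpha>_lt_1
  by (intro DERIV_second_diff) (auto intro!: DERIV_add DERIV_cdivide DERIV_fpow_prim DERIV_fpow)

lemma second_diff_fpow_add_half_fpow'_le:
  assumes "2 \<le> x" "x \<le> y" "y \<le> x + 1"
  shows "second_diff (\<lambda>y. fpow \<alpha> y + fpow' \<alpha> y / 2) y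
           \<le> - ((1 - \<alpha>) * \<alpha> * (x + 2) powr (- \<alpha> - 2) * (x - 3 / 2))"
proof -
  define P where "P = (1 - \<alpha>) * \<alpha> * (x + 2) powr (- \<alpha> - 2)"
  have "second_diff (\<lambda>y. fpow \<alpha> y + fpow' \<alpha> y / 2) y \<le> - (P * (x - 2) + P * (x - 1)) / 2"
  proof (rule second_diff_le)
    fix t assume "y - 1 \<le> t" "t \<le> y + 1"
    with assms have "0 < t" by simp
    then show "((\<lambda>y. fpow \<alpha> y + fpow' \<alpha> y / 2) has_real_derivative
                 fpow' \<alpha> t + fpow'' \<alpha> t / 2) (at t)"
      and "((\<lambda>y. fpow' \<alpha> y + fpow'' \<alpha> y / 2) has_real_derivative
                 fpow'' \<alpha> t + fpow''' \<alpha> t / 2) (at t)"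
      by (auto intro!: DERIV_add DERIV_cdivide DERIV_fpow DERIV_fpow' DERIV_fpow'')
  next
    fix t assume "y - 1 \<le> t" "t \<le> y"
    with assms show "fpow'' \<alpha> t + fpow''' \<alpha> t / 2 \<le> - (P * (x - 2))"
      using fpow''_add_half_fpow'''_le[of "x - 1" t "x + 2"] by (simp add: P_def)
  next
    fix t assume "y \<le> t" "t \<le> y + 1"
    with assms show "fpow'' \<alpha> t + fpow''' \<alpha> t / 2 \<le> - (P * (x - 1))"
      using fpow''_add_half_fpow'''_le[of x t "x + 2"] by (simp add: P_def)
  qed
  then show ?thesis by (simp add: P_def algebra_simps)
qed

text \<open>The margin -f''(x + 2)/12 is the upper bound of b_(x+2), the extra term of c_(j-1).\<close>

lemma ccoef_interior_decrease:
  assumes "2 \<le> x"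
  shows "ccoef_interior \<alpha> (x + 1) - fpow'' \<alpha> (x + 2) / 12 < ccoef_interior \<alpha> x"
proof -
  define P where "P = (1 - \<alpha>) * \<alpha> * (x + 2) powr (- \<alpha> - 2)"
  define K where "K = P * (x - 3 / 2)"
  have "ccoef_interior \<alpha> (x + 1) - ccoef_interior \<alpha> x \<le> - K * (x + 1) - - K * x"
  proof (rule DERIV_le_imp_increment_le)
    fix y assume "x \<le> y" "y \<le> x + 1"
    with assms show "(ccoef_interior \<alpha> has_real_derivative
                        second_diff (\<lambda>y. fpow \<alpha> y + fpow' \<alpha> y / 2) y) (at y)"
        and "second_diff (\<lambda>y. fpow \<alpha> y + fpow' \<alpha> y / 2) y \<le> - K"
      by (simp_all add: DERIV_ccoef_interior second_diff_fpow_add_half_fpow'_le K_def P_def)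
    show "((\<lambda>y. - K * y) has_real_derivative - K) (at y)"
      by (auto intro!: derivative_eq_intros)
  qed simp
  moreover have "- fpow'' \<alpha> (x + 2) = P * (x + 2)"
  proof -
    have "(x + 2) powr (- \<alpha> - 1) = (x + 2) powr (1 + (- \<alpha> - 2))"
      by (rule arg_cong[where f = "(powr) (x + 2)"]) simp
    also have "\<dots> = (x + 2) * (x + 2) powr (- \<alpha> - 2)" using assms by (subst powr_add) simp
    finally show ?thesis by (simp add: fpow''_def P_def)
  qed
  moreover have "P * (x + 2) / 12 < K"
  proof -
    have "(x + 2) / 12 < x - 3 / 2" using assms by simp
    moreover have "0 < P" using \<alpha>_pos \<alpha>_lt_1 assms by (simp add: P_def)
    ultimately have "P * ((x + 2) / 12) < P * (x - 3 / 2)"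
      by (rule mult_strict_left_mono)
    then show ?thesis by (simp add: K_def)
  qed
  ultimately show ?thesis by (simp add: algebra_simps)
qed

lemma ccoef_1_ge: "2 \<le> j \<Longrightarrow> acoef \<alpha> 1 + bcoef \<alpha> 1 - bcoef \<alpha> 0 \<le> ccoef \<alpha> j 1"
  using bcoef_nonneg[of 2] by (cases "j = 2") (auto simp: ccoef_def)

lemma ccoef_2_le: "2 \<le> j \<Longrightarrow> ccoef \<alpha> j 2 \<le> acoef \<alpha> 2 + bcoef \<alpha> 2 + bcoef \<alpha> 3 - bcoef \<alpha> 1"
  using bcoef_nonneg[of 2] bcoef_nonneg[of 3] by (cases "j = 2"; cases "j = 3") (auto simp: ccoef_def)

lemma ccoef_last_lt:
  assumes "2 \<le> j"
  shows "ccoef \<alpha> j j < (1 - \<alpha>) / real j powr \<alpha>"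
proof -
  have "0 \<le> bcoef \<alpha> j" "0 \<le> bcoef \<alpha> (j - 1)"
    using assms by (simp_all add: bcoef_nonneg)
  with assms have "ccoef \<alpha> j j \<le> acoef \<alpha> j" by (simp add: ccoef_last)
  also have "acoef \<alpha> j < fpow' \<alpha> (real j)"
    using assms acoef_bounds[of j] by simp
  finally show ?thesis by (simp add: fpow'_eq_divide)
qed

lemma ccoef_last_gt:
  assumes "2 \<le> j"
  shows "11 / 16 * ((1 - \<alpha>) / (real j + 1) powr \<alpha>) < ccoef \<alpha> j j"
proof -
  define J where "J = real j"
  define F where "F = fpow' \<alpha> (J + 1)"
  have J: "2 \<le> J" using assms by (simp add: J_def)
  have "bcoef \<alpha> j \<le> - fpow'' \<alpha> J / 12"
    using assms bcoef_le[of j] by (simp add: J_def)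
  moreover have "- fpow'' \<alpha> J \<le> (J + 1) / J^2 * F"
    unfolding F_def using J by (intro neg_fpow''_le_fpow') auto
  moreover have "bcoef \<alpha> (j - 1) \<le> - fpow'' \<alpha> (J - 1) / 12"
    using assms bcoef_le[of "j - 1"] by (simp add: J_def of_nat_diff)
  moreover have "- fpow'' \<alpha> (J - 1) \<le> (J + 1) / (J - 1)^2 * F"
    unfolding F_def using J by (intro neg_fpow''_le_fpow') auto
  moreover have "(J + 1) / J^2 * F + (J + 1) / (J - 1)^2 * F \<le> 15 / 4 * F"
  proof -
    have "J + 1 \<le> 3 / 4 * J^2" and "J + 1 \<le> 3 * (J - 1)^2"
      using mult_nonneg_nonneg[of "3 * J + 2" "J - 2"] mult_nonneg_nonneg[of "3 * J - 1" "J - 2"] J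
      by (simp_all add: algebra_simps power2_eq_square)
    with J have "(J + 1) / J^2 \<le> 3 / 4" and "(J + 1) / (J - 1)^2 \<le> 3"
      by (simp_all add: pos_divide_le_eq)
    then have "(J + 1) / J^2 + (J + 1) / (J - 1)^2 \<le> 15 / 4" by linarith
    moreover have "0 \<le> F" using \<alpha>_lt_1 by (simp add: F_def fpow'_def)
    ultimately have "((J + 1) / J^2 + (J + 1) / (J - 1)^2) * F \<le> 15 / 4 * F"
      by (rule mult_right_mono)
    then show ?thesis by (simp only: distrib_right)
  qed
  moreover have "F < acoef \<alpha> j"
    using assms acoef_bounds[of j] by (simp add: F_def J_def)
  ultimately have "11 / 16 * F < ccoef \<alpha> j j"
    using ccoef_last[OF assms, of \<alpha>] by linarith
  then show ?thesis by (simp add: F_def J_def fpow'_eq_divide)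
qed

lemma ccoef_2_lt_0:
  assumes "2 \<le> j"
  shows "ccoef \<alpha> j 2 < ccoef \<alpha> j 0"
proof -
  define P where "P = (1 - \<alpha>) * \<alpha>"
  have "acoef \<alpha> 2 < fpow' \<alpha> 2" using acoef_bounds[of 2] by simp
  also have "\<dots> < fpow' \<alpha> 1" by (rule fpow'_strict_antimono) simp_all
  also have "\<dots> = 1 - \<alpha>" by (simp add: fpow'_def)
  finally have "acoef \<alpha> 2 < 1 - \<alpha>" .
  moreover have "bcoef \<alpha> 2 \<le> P / 24" and "bcoef \<alpha> 3 \<le> P / 36"
    using bcoef_le_inverse[of 2] bcoef_le_inverse[of 3] by (simp_all add: P_def)
  moreover have "0 \<le> P" and "P \<le> \<alpha>"
    using \<alpha>_pos \<alpha>_lt_1 by (simp_all add: P_def mult_left_le_one_le)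
  moreover have "1 / 2 < 1 / (2 - \<alpha>)"
    using \<alpha>_pos \<alpha>_lt_1 by (simp add: divide_simps)
  moreover have "0 \<le> bcoef \<alpha> 1" by (simp add: bcoef_nonneg)
  ultimately show ?thesis
    using ccoef_2_le[OF assms] ccoef_0[of \<alpha> j] by linarith
qed

lemma ccoef_0_1_2_pos:
  assumes "2 \<le> j"
  shows "0 < ccoef \<alpha> j 0 + 3 * ccoef \<alpha> j 1 - 4 * ccoef \<alpha> j 2"
proof -
  define P where "P = (1 - \<alpha>) * \<alpha>"
  have "acoef \<alpha> 2 < fpow' \<alpha> 2" and "fpow' \<alpha> 2 < acoef \<alpha> 1"
    using acoef_bounds[of 2] acoef_bounds[of 1] by simp_all
  moreover have "fpow' \<alpha> 2 < 1 - \<alpha>"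
    using fpow'_strict_antimono[of 1 2] by (simp add: fpow'_def)
  moreover have "bcoef \<alpha> 2 \<le> P / 24" and "bcoef \<alpha> 3 \<le> P / 36"
    using bcoef_le_inverse[of 2] bcoef_le_inverse[of 3] by (simp_all add: P_def)
  moreover have "ccoef \<alpha> j 0 - 3 * bcoef \<alpha> 0 = 2 - 2 / (2 - \<alpha>)"
    by (simp add: ccoef_0 bcoef_0)
  moreover have "2 - 2 / (2 - \<alpha>) - (1 - \<alpha>) = P / (2 - \<alpha>)"
    using \<alpha>_lt_1 by (simp add: P_def field_simps)
  moreover have "P / 2 \<le> P / (2 - \<alpha>)"
    using \<alpha>_pos \<alpha>_lt_1 by (intro divide_left_mono) (simp_all add: P_def)
  moreover have "0 < P" using \<alpha>_pos \<alpha>_lt_1 by (simp add: P_def)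
  moreover have "0 \<le> bcoef \<alpha> 1" by (simp add: bcoef_nonneg)
  ultimately show ?thesis
    using ccoef_1_ge[OF assms] ccoef_2_le[OF assms] by linarith
qed

lemma ccoef_last_lt_penultimate:
  assumes "3 \<le> j"
  shows "ccoef \<alpha> j j < ccoef \<alpha> j (j - 1)"
proof -
  define J where "J = real j"
  define Q where "Q = - fpow'' \<alpha> (J + 1)"
  have j: "2 \<le> j" using assms by simp
  have J: "3 \<le> J" "real (j - 1) = J - 1" "real (j - 2) = J - 2"
    using assms by (simp_all add: J_def of_nat_diff)
  \<comment> \<open>c_(j-1) - c_j = (a_(j-1) - a_j) + 2 b_(j-1) + 2 b_j - b_(j-2); each term is compared with Q,
    and j + 1 \<le> 4 (j - 2) keeps b_(j-2) below 4 Q / 3.\<close>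
  have "Q \<le> acoef \<alpha> (j - 1) - acoef \<alpha> j"
    using acoef_pred_sub_acoef_ge[OF j] by (simp add: Q_def J_def)
  moreover have "Q / 12 \<le> bcoef \<alpha> (j - 1)"
  proof -
    have "- fpow'' \<alpha> J / 12 \<le> bcoef \<alpha> (j - 1)"
      using assms bcoef_ge[of "j - 1"] J(2) by simp
    with fpow''_mono[of J "J + 1"] J show ?thesis by (simp add: Q_def)
  qed
  moreover have "Q / 12 \<le> bcoef \<alpha> j"
    using assms bcoef_ge[of j] by (simp add: Q_def J_def)
  moreover have "bcoef \<alpha> (j - 2) < 16 * Q / 12"
  proof -
    have "bcoef \<alpha> (j - 2) \<le> - fpow'' \<alpha> (J - 2) / 12"
      using assms bcoef_le[of "j - 2"] J(3) by simp
    moreover have "- fpow'' \<alpha> (J - 2) < - 16 * fpow'' \<alpha> (J + 1)"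
      using J(1) by (intro neg_fpow''_lt_16) auto
    ultimately show ?thesis unfolding Q_def by linarith
  qed
  ultimately have "ccoef \<alpha> j j < acoef \<alpha> (j - 1) + bcoef \<alpha> (j - 1) + bcoef \<alpha> j - bcoef \<alpha> (j - 2)"
    unfolding ccoef_last[OF j] by linarith
  then show ?thesis
    unfolding ccoef_penultimate[OF assms] .
qed

lemma ccoef_Suc_lt:
  assumes "2 \<le> s" "s \<le> j - 1"
  shows "ccoef \<alpha> j (s + 1) < ccoef \<alpha> j s"
proof -
  have C_s: "ccoef \<alpha> j s = ccoef_interior \<alpha> (real s)" if "s + 2 \<le> j"
    using that assms ccoef_mid[of s j] acoef_bcoef_eq_ccoef_interior[of s] by simp
  have decrease: "ccoef_interior \<alpha> (real s + 1) - fpow'' \<alpha> (real s + 2) / 12 < ccoef_interior \<alpha> (real s)"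
    using assms ccoef_interior_decrease[of "real s"] by simp
  consider "s + 3 \<le> j" | "s + 2 = j" | "s + 1 = j" using assms by linarith
  then show ?thesis
  proof cases
    case 1
    then have "ccoef \<alpha> j (s + 1) = ccoef_interior \<alpha> (real s + 1)"
      using ccoef_mid[of "s + 1" j] acoef_bcoef_eq_ccoef_interior[of "s + 1"] by (simp add: ac_simps)
    with 1 C_s decrease fpow''_nonpos[of "real s + 2"] show ?thesis by simp
  next
    case 2
    then have "ccoef \<alpha> j (s + 1) = acoef \<alpha> (s + 1) + bcoef \<alpha> (s + 1) + bcoef \<alpha> (s + 2) - bcoef \<alpha> s"
      using assms ccoef_penultimate[of "s + 2" \<alpha>] by (simp add: 2[symmetric])
    moreover have "acoef \<alpha> (s + 1) + bcoef \<alpha> (s + 1) - bcoef \<alpha> s = ccoef_interior \<alpha> (real s + 1)"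
      using acoef_bcoef_eq_ccoef_interior[of "s + 1" \<alpha>] by (simp add: add.commute)
    ultimately have "ccoef \<alpha> j (s + 1) = ccoef_interior \<alpha> (real s + 1) + bcoef \<alpha> (s + 2)"
      by linarith
    moreover have "bcoef \<alpha> (s + 2) \<le> - fpow'' \<alpha> (real s + 2) / 12"
      using bcoef_le[of "s + 2"] by (simp add: add.commute)
    ultimately show ?thesis using 2 C_s decrease by simp
  next
    case 3
    with assms ccoef_last_lt_penultimate[of "s + 1"] show ?thesis by (simp add: 3[symmetric])
  qed
qed

end

theorem lemma3:
  fixes \<alpha> :: real and j :: nat
  assumes "0 < \<alpha>" and "\<alpha> < 1" and "j \<ge> 2"
  shows "11 / 16 * ((1 - \<alpha>) / (real j + 1) powr \<alpha>) < ccoef \<alpha> j j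
       \<and> ccoef \<alpha> j j < (1 - \<alpha>) / (real j) powr \<alpha>
       \<and> ccoef \<alpha> j 0 > ccoef \<alpha> j 2
       \<and> (\<forall>s. 2 \<le> s \<and> s \<le> j - 1 \<longrightarrow> ccoef \<alpha> j s > ccoef \<alpha> j (s + 1))
       \<and> ccoef \<alpha> j 0 + 3 * ccoef \<alpha> j 1 - 4 * ccoef \<alpha> j 2 > 0"
  using ccoef_last_gt ccoef_last_lt ccoef_2_lt_0 ccoef_Suc_lt ccoef_0_1_2_pos assms by blast

end
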